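(* Let $n>3$ and let $A=[A_1,\ldots,A_n]$ be an $n\times n\times n$ ASHM, with $L=L(A)=1A_1+\cdots+nA_n$. Then none of the second row, the $(n-1)$-st row, the second column, and the $(n-1)$-st column of $L$ is constant.
   Context: An $n\times n$ alternating sign matrix (ASM) is an $n\times n$ matrix with entries in $\{0,1,-1\}$ such that in every row and column the nonzeros alternate in sign, beginning and ending with $+1$. An $n\times n\times n$ hypermatrix $A=[a_{ijk}]$ is written $A=[A_1,\ldots,A_n]$ with $A_k=[a_{ijk}]_{i,j}$; lines are obtained by fixing two of the three indices. $A$ is an ASHM if all entries lie in $\{0,\pm1\}$ and in every line the nonzeros alternate in sign beginning and ending with $+1$. A line of a matrix is constant if all its entries are equal. *)

theory Defs
  imports Main
begin

definition alt_sign_line :: "int list \<Rightarrow> bool" where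
  "alt_sign_line xs \<longleftrightarrow>
     (let ys = filter (\<lambda>x. x \<noteq> 0) xs in
        ys \<noteq> [] \<and> hd ys = 1 \<and> last ys = 1 \<and>
        (\<forall>i. Suc i < length ys \<longrightarrow> ys ! Suc i = - (ys ! i)))"

definition ASHM :: "nat \<Rightarrow> (nat \<Rightarrow> nat \<Rightarrow> nat \<Rightarrow> int) \<Rightarrow> bool" where
  "ASHM n A \<longleftrightarrow>
     (\<forall>i\<in>{1..n}. \<forall>j\<in>{1..n}. \<forall>k\<in>{1..n}. A i j k \<in> {-1, 0, 1}) \<and>
     (\<forall>j\<in>{1..n}. \<forall>k\<in>{1..n}. alt_sign_line (map (\<lambda>i. A i j k) [1..<n+1])) \<and>
     (\<forall>i\<in>{1..n}. \<forall>k\<in>{1..n}. alt_sign_line (map (\<lambda>j. A i j k) [1..<n+1])) \<and>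
     (\<forall>i\<in>{1..n}. \<forall>j\<in>{1..n}. alt_sign_line (map (\<lambda>k. A i j k) [1..<n+1]))"

definition Lmat :: "nat \<Rightarrow> (nat \<Rightarrow> nat \<Rightarrow> nat \<Rightarrow> int) \<Rightarrow> nat \<Rightarrow> nat \<Rightarrow> int" where
  "Lmat n A i j = (\<Sum>k=1..n. int k * A i j k)"

definition const_row :: "nat \<Rightarrow> (nat \<Rightarrow> nat \<Rightarrow> int) \<Rightarrow> nat \<Rightarrow> bool" where
  "const_row n M i \<longleftrightarrow> (\<forall>j\<in>{1..n}. \<forall>j'\<in>{1..n}. M i j = M i j')"

definition const_col :: "nat \<Rightarrow> (nat \<Rightarrow> nat \<Rightarrow> int) \<Rightarrow> nat \<Rightarrow> bool" where
  "const_col n M j \<longleftrightarrow> (\<forall>i\<in>{1..n}. \<forall>i'\<in>{1..n}. M i j = M i' j)"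

end

theory Submission
  imports Defs
begin

text \<open>Every line of an ASHM has partial sums in $\{0,1\}$ and total $1$. Hence an entry at the
  start or end of a line is never $-1$, a $-1$ in second position forces a $1$ in first
  position, and two $1$s always enclose a $-1$; a line without $-1$ is a unit vector $e_p$, and
  then the corresponding entry of $L$ is $p$. If row $2$ of $L$ were constant with value $p$,
  then the $k$-lines through $(2,1)$ and $(2,n)$ are both $e_p$, which forces
  $a_{2,2,p} = a_{2,n-1,p} = -1$, hence $a_{1,2,p} = a_{1,n-1,p} = 1$. As $2 < n-1$, some
  $a_{1,l,p} = -1$ lies between them, at the start of the line $(\cdot,l,p)$: a contradiction.
  The other three lines follow by the symmetries $i \mapsto n+1-i$ and $i \leftrightarrow j$.\<close>

lemma alternating_nth:
  assumes "ys \<noteq> []" "hd ys = (1::int)"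
    and "\<forall>i. Suc i < length ys \<longrightarrow> ys ! Suc i = - (ys ! i)"
    and "i < length ys"
  shows "ys ! i = (-1) ^ i"
  using assms(4)
proof (induction i)
  case 0
  then show ?case using assms(1,2) by (simp add: hd_conv_nth)
next
  case (Suc i)
  then show ?case using assms(3) by simp
qed

lemma sum_list_take_alternating:
  assumes "\<And>i. i < length ys \<Longrightarrow> ys ! i = (-1::int) ^ i" and "r \<le> length ys"
  shows "sum_list (take r ys) = of_bool (odd r)"
  using assms(2)
proof (induction r)
  case (Suc r)
  then have "take (Suc r) ys = take r ys @ [ys ! r]"
    by (simp add: take_Suc_conv_app_nth)
  then show ?case using Suc assms(1)[of r] by simp
qed simp

lemma alt_sign_line_prefix_sums:
  assumes "alt_sign_line xs"
  shows "sum_list (take t xs) \<in> {0, 1}" and "sum_list xs = 1"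
proof -
  let ?nz = "filter (\<lambda>x. x \<noteq> (0::int))"
  define ys where "ys = ?nz xs"
  have ys: "ys \<noteq> []" "hd ys = 1" "last ys = 1"
    "\<forall>i. Suc i < length ys \<longrightarrow> ys ! Suc i = - (ys ! i)"
    using assms unfolding alt_sign_line_def ys_def Let_def by auto
  have ys_nth: "\<And>i. i < length ys \<Longrightarrow> ys ! i = (-1) ^ i"
    using alternating_nth[OF ys(1,2,4)] .
  have sum_nz: "sum_list (?nz zs) = sum_list zs" for zs
    using sum_list_map_filter[of zs "\<lambda>x. x \<noteq> 0" id] by simp
  have split: "ys = ?nz (take t xs) @ ?nz (drop t xs)"
    unfolding ys_def by (metis append_take_drop_id filter_append)
  then have "?nz (take t xs) = take (length (?nz (take t xs))) ys"
    by simp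
  then show "sum_list (take t xs) \<in> {0, 1}"
    using sum_list_take_alternating[OF ys_nth, of "length (?nz (take t xs))"] split
    by (simp add: sum_nz)
  have "(-1) ^ (length ys - 1) = (1::int)"
    using ys_nth[of "length ys - 1"] ys(1,3) by (simp add: last_conv_nth)
  then have "odd (length ys)"
    using ys(1) neg_one_odd_power[of "length ys - 1", where ?'a = int] by fastforce
  then show "sum_list xs = 1"
    using sum_list_take_alternating[OF ys_nth, of "length ys"] by (simp add: ys_def sum_nz)
qed

definition alt_sign_seq :: "nat \<Rightarrow> (nat \<Rightarrow> int) \<Rightarrow> bool" where
  "alt_sign_seq n f \<longleftrightarrow> (\<forall>t\<le>n. (\<Sum>k=1..t. f k) \<in> {0, 1}) \<and> (\<Sum>k=1..n. f k) = 1"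

lemma sum_list_take_map_upt:
  assumes "t \<le> n"
  shows "sum_list (take t (map f [1..<n+1])) = (\<Sum>k=1..t. f k)"
proof -
  have "take t (map f [1..<n+1]) = map f [1..<Suc t]"
    using assms by (simp add: take_map take_upt del: upt_Suc)
  then show ?thesis
    by (simp only: interv_sum_list_conv_sum_set_nat set_upt atLeastLessThanSuc_atLeastAtMost)
qed

lemma alt_sign_line_imp_alt_sign_seq:
  assumes "alt_sign_line (map f [1..<n+1])"
  shows "alt_sign_seq n f"
proof -
  have partial: "(\<Sum>k=1..t. f k) \<in> {0, 1}" if "t \<le> n" for t
    using alt_sign_line_prefix_sums(1)[OF assms, of t] sum_list_take_map_upt[of t n f, OF that]
    by (simp del: upt_Suc)
  have "(\<Sum>k=1..n. f k) = sum_list (take n (map f [1..<n+1]))"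
    using sum_list_take_map_upt[of n n f] by simp
  also have "take n (map f [1..<n+1]) = map f [1..<n+1]"
    by (simp only: take_all_iff length_map length_upt)
  also have "sum_list (map f [1..<n+1]) = 1"
    using alt_sign_line_prefix_sums(2)[OF assms] .
  finally have "(\<Sum>k=1..n. f k) = 1" .
  then show ?thesis
    unfolding alt_sign_seq_def using partial by (intro conjI allI impI)
qed

lemma sum_atLeastAtMost_split:
  fixes f :: "nat \<Rightarrow> 'a::comm_monoid_add"
  assumes "l \<le> m" "m \<le> u"
  shows "(\<Sum>k=l..u. f k) = (\<Sum>k=l..m. f k) + (\<Sum>k\<in>{m<..u}. f k)"
  by (subst ivl_disj_un_two(8)[OF assms, symmetric]) (simp add: sum.union_disjoint ivl_disj_int_two(8))

lemma alt_sign_seq_partial_sum: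
  "alt_sign_seq n f \<Longrightarrow> t \<le> n \<Longrightarrow> (\<Sum>k=1..t. f k) \<in> {0, 1}"
  unfolding alt_sign_seq_def by blast

lemma alt_sign_seq_entry:
  assumes "alt_sign_seq n f" "k \<in> {1..n}"
  shows "f k \<in> {-1, 0, 1}"
proof -
  obtain t where k: "k = Suc t" using assms(2) by (cases k) auto
  have "f k = (\<Sum>i=1..k. f i) - (\<Sum>i=1..t. f i)" by (simp add: k)
  then show ?thesis
    using alt_sign_seq_partial_sum[OF assms(1), of k] alt_sign_seq_partial_sum[OF assms(1), of t]
      assms(2) k by auto
qed

lemma alt_sign_seq_first:
  "alt_sign_seq n f \<Longrightarrow> 1 \<le> n \<Longrightarrow> f 1 \<in> {0, 1}"
  using alt_sign_seq_partial_sum[of n f 1] by simp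

lemma alt_sign_seq_second_neg:
  assumes "alt_sign_seq n f" "2 \<le> n" "f 2 = -1"
  shows "f 1 = 1"
proof -
  have "(\<Sum>k=1..2. f k) = f 1 + f 2" by (simp add: numeral_2_eq_2)
  then show ?thesis
    using alt_sign_seq_partial_sum[OF assms(1), of 2] alt_sign_seq_first[OF assms(1)] assms(2,3)
    by auto
qed

lemma alt_sign_seq_neg_between:
  assumes f: "alt_sign_seq n f" and ij: "1 \<le> i" "i < j" "j \<le> n" and "f i = 1" "f j = 1"
  shows "\<exists>l. i < l \<and> l < j \<and> f l = -1"
proof -
  let ?S = "\<lambda>t. \<Sum>k=1..t. f k"
  obtain i' j' where i': "i = Suc i'" and j': "j = Suc j'" using ij by (cases i; cases j) auto
  have "?S i = ?S i' + 1" "?S j = ?S j' + 1" using \<open>f i = 1\<close> \<open>f j = 1\<close> i' j' by simp_all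
  moreover have "?S i \<in> {0, 1}" "?S i' \<in> {0, 1}" "?S j \<in> {0, 1}" "?S j' \<in> {0, 1}"
    using ij i' j' alt_sign_seq_partial_sum[OF f, of i] alt_sign_seq_partial_sum[OF f, of i']
      alt_sign_seq_partial_sum[OF f, of j] alt_sign_seq_partial_sum[OF f, of j'] by simp_all
  ultimately have "?S i = 1" "?S j' = 0" by auto
  moreover have "?S j' = ?S i + (\<Sum>k\<in>{i<..j'}. f k)"
    using sum_atLeastAtMost_split[of 1 i j'] ij j' by simp
  ultimately have "(\<Sum>k\<in>{i<..j'}. f k) < 0" by simp
  then obtain l where l: "l \<in> {i<..j'}" "f l < 0" by (metis not_less sum_nonneg)
  then have "f l = -1" using alt_sign_seq_entry[OF f, of l] ij j' by auto
  then show ?thesis using l j' by auto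
qed

lemma alt_sign_seq_nonneg_unit:
  assumes f: "alt_sign_seq n f" and nonneg: "\<forall>k\<in>{1..n}. f k \<noteq> -1"
  shows "\<exists>p\<in>{1..n}. \<forall>k\<in>{1..n}. f k = of_bool (k = p)"
proof -
  have entry01: "f k \<in> {0, 1}" if "k \<in> {1..n}" for k
    using alt_sign_seq_entry[OF f that] nonneg that by auto
  have "(\<Sum>k=1..n. f k) > 0" using f unfolding alt_sign_seq_def by simp
  then obtain p where "p \<in> {1..n}" "f p > 0" by (metis not_less sum_nonpos)
  then have p: "p \<in> {1..n}" "f p = 1" using entry01[of p] by auto
  have "f k = 0" if k: "k \<in> {1..n}" "k \<noteq> p" for k
  proof (rule ccontr)
    assume "f k \<noteq> 0"
    then have "f k = 1" using entry01[OF k(1)] by simp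
    then obtain l where "min k p < l" "l < max k p" "f l = -1"
      using alt_sign_seq_neg_between[OF f, of "min k p" "max k p"] p k
      by (cases "k < p") (auto simp: min_def max_def)
    then show False using nonneg k p by auto
  qed
  then show ?thesis using p by (intro bexI[of _ p]) auto
qed

lemma weighted_sum_unit:
  assumes "p \<in> {1..n}" "\<forall>k\<in>{1..n}. f k = of_bool (k = p)"
  shows "(\<Sum>k=1..n. int k * f k) = int p"
proof -
  have "(\<Sum>k=1..n. int k * f k) = (\<Sum>k=1..n. if k = p then int p else 0)"
    using assms(2) by (intro sum.cong) auto
  then show ?thesis using assms(1) by simp
qed

lemma alt_sign_seq_reflect:
  assumes f: "alt_sign_seq n f"
  shows "alt_sign_seq n (\<lambda>k. f (n + 1 - k))"
proof -
  have reflected: "(\<Sum>k=1..t. f (n + 1 - k)) = 1 - (\<Sum>k=1..n - t. f k)" if "t \<le> n" for t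
  proof -
    have "(\<Sum>k=1..t. f (n + 1 - k)) = (\<Sum>k\<in>{n - t<..n}. f k)"
      using that by (intro sum.reindex_bij_witness[where i="\<lambda>k. n + 1 - k" and j="\<lambda>k. n + 1 - k"])
        auto
    also have "\<dots> = (\<Sum>k=1..n. f k) - (\<Sum>k=1..n - t. f k)"
    proof (cases "n - t = 0")
      case True
      then have "{n - t<..n} = {1..n}" by auto
      then show ?thesis using True by simp
    next
      case False
      then show ?thesis using sum_atLeastAtMost_split[of 1 "n - t" n f] by simp
    qed
    finally show ?thesis using f unfolding alt_sign_seq_def by simp
  qed
  have "(\<Sum>k=1..t. f (n + 1 - k)) \<in> {0, 1}" if "t \<le> n" for t
    using reflected[OF that] alt_sign_seq_partial_sum[OF f, of "n - t"] by auto
  moreover have "(\<Sum>k=1..n. f (n + 1 - k)) = 1" using reflected[of n] by simp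
  ultimately show ?thesis unfolding alt_sign_seq_def by blast
qed

definition alt_sign_hyper :: "nat \<Rightarrow> (nat \<Rightarrow> nat \<Rightarrow> nat \<Rightarrow> int) \<Rightarrow> bool" where
  "alt_sign_hyper n A \<longleftrightarrow>
     (\<forall>j\<in>{1..n}. \<forall>k\<in>{1..n}. alt_sign_seq n (\<lambda>i. A i j k)) \<and>
     (\<forall>i\<in>{1..n}. \<forall>k\<in>{1..n}. alt_sign_seq n (\<lambda>j. A i j k)) \<and>
     (\<forall>i\<in>{1..n}. \<forall>j\<in>{1..n}. alt_sign_seq n (\<lambda>k. A i j k))"

lemma ASHM_imp_alt_sign_hyper: "ASHM n A \<Longrightarrow> alt_sign_hyper n A"
  unfolding ASHM_def alt_sign_hyper_def by (simp add: alt_sign_line_imp_alt_sign_seq)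

lemma alt_sign_hyper_lines:
  assumes "alt_sign_hyper n A" "i \<in> {1..n}" "j \<in> {1..n}" "k \<in> {1..n}"
  shows "alt_sign_seq n (\<lambda>i'. A i' j k)" "alt_sign_seq n (\<lambda>j'. A i j' k)"
    "alt_sign_seq n (\<lambda>k'. A i j k')"
  using assms unfolding alt_sign_hyper_def by blast+

lemma alt_sign_hyper_transpose: "alt_sign_hyper n A \<Longrightarrow> alt_sign_hyper n (\<lambda>i j k. A j i k)"
  unfolding alt_sign_hyper_def by auto

lemma alt_sign_hyper_reflect:
  assumes "alt_sign_hyper n A"
  shows "alt_sign_hyper n (\<lambda>i j k. A (n + 1 - i) j k)"
proof -
  have reflect_mem: "n + 1 - i \<in> {1..n}" if "i \<in> {1..n}" for i
    using that by auto
  have "alt_sign_seq n (\<lambda>i. A (n + 1 - i) j k)" if "j \<in> {1..n}" "k \<in> {1..n}" for j k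
    using assms that alt_sign_seq_reflect[of n "\<lambda>i. A i j k"] unfolding alt_sign_hyper_def by blast
  moreover have "alt_sign_seq n (\<lambda>j. A (n + 1 - i) j k)" "alt_sign_seq n (\<lambda>k. A (n + 1 - i) j k)"
    if "i \<in> {1..n}" "j \<in> {1..n}" "k \<in> {1..n}" for i j k
    using assms that reflect_mem[OF that(1)] unfolding alt_sign_hyper_def by blast+
  ultimately show ?thesis unfolding alt_sign_hyper_def by blast
qed

lemma alt_sign_hyper_reflect_col:
  "alt_sign_hyper n A \<Longrightarrow> alt_sign_hyper n (\<lambda>i j k. A i (n + 1 - j) k)"
  using alt_sign_hyper_transpose[OF alt_sign_hyper_reflect[OF alt_sign_hyper_transpose]] .

lemma alt_sign_hyper_first_col_unit:
  assumes A: "alt_sign_hyper n A" and i: "i \<in> {1..n}"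
  obtains p where "p \<in> {1..n}" "\<forall>k\<in>{1..n}. A i 1 k = of_bool (k = p)" "Lmat n A i 1 = int p"
proof -
  have one: "1 \<in> {1..n}" using i by simp
  have "A i 1 k \<noteq> -1" if "k \<in> {1..n}" for k
    using alt_sign_seq_first[OF alt_sign_hyper_lines(2)[OF A i one that]] i by auto
  then obtain p where p: "p \<in> {1..n}" "\<forall>k\<in>{1..n}. A i 1 k = of_bool (k = p)"
    using alt_sign_seq_nonneg_unit[OF alt_sign_hyper_lines(3)[OF A i one one]] by blast
  moreover have "Lmat n A i 1 = int p"
    unfolding Lmat_def using weighted_sum_unit[OF p] .
  ultimately show thesis using that by blast
qed

lemma alt_sign_hyper_second_neg:
  assumes A: "alt_sign_hyper n A" and n: "2 \<le> n" and i: "i \<in> {1..n}" and p: "p \<in> {1..n}"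
    and first: "\<forall>k\<in>{1..n}. A i 1 k = of_bool (k = p)" and L: "Lmat n A i 2 = int p"
  shows "A i 2 p = -1"
proof (cases "\<exists>k\<in>{1..n}. A i 2 k = -1")
  case True
  then obtain k where k: "k \<in> {1..n}" "A i 2 k = -1" by blast
  then have "A i 1 k = 1"
    using alt_sign_seq_second_neg[OF alt_sign_hyper_lines(2)[OF A i i k(1)] n] by simp
  then have "k = p" using first k(1) by auto
  with k show ?thesis by simp
next
  case False
  have two: "2 \<in> {1..n}" using n by simp
  obtain a where a: "a \<in> {1..n}" "\<forall>k\<in>{1..n}. A i 2 k = of_bool (k = a)"
    using alt_sign_seq_nonneg_unit[OF alt_sign_hyper_lines(3)[OF A i two two]] False by blast
  have "a = p" using weighted_sum_unit[OF a] L unfolding Lmat_def by simp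
  then have "A i 1 p = 1" "A i 2 p = 1" using first a p by simp_all
  then obtain l :: nat where "1 < l" "l < 2"
    using alt_sign_seq_neg_between[OF alt_sign_hyper_lines(2)[OF A i i p], of 1 2] n by auto
  then show ?thesis by simp
qed

lemma Lmat_second_row_not_const:
  assumes n: "3 < n" and A: "alt_sign_hyper n A"
  shows "\<not> const_row n (Lmat n A) 2"
proof
  assume const: "const_row n (Lmat n A) 2"
  let ?A' = "\<lambda>i j k. A i (n + 1 - j) k"
  \<comment> \<open>reflecting $j$ moves columns $n$ and $n-1$ to positions $1$ and $2$\<close>
  have A': "alt_sign_hyper n ?A'" using alt_sign_hyper_reflect_col[OF A] .
  have L': "Lmat n ?A' i j = Lmat n A i (n + 1 - j)" for i j by (simp add: Lmat_def)
  have idx: "1 \<in> {1..n}" "2 \<in> {1..n}" "n - 1 \<in> {1..n}" "n \<in> {1..n}" "n + 1 - 2 = n - 1"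
    using n by auto
  obtain p where p: "p \<in> {1..n}" "\<forall>k\<in>{1..n}. A 2 1 k = of_bool (k = p)" "Lmat n A 2 1 = int p"
    using alt_sign_hyper_first_col_unit[OF A idx(2)] by blast
  have row: "Lmat n A 2 j = int p" if "j \<in> {1..n}" for j
    using const p(3) that idx(1) unfolding const_row_def by metis
  obtain q where q: "q \<in> {1..n}" "\<forall>k\<in>{1..n}. ?A' 2 1 k = of_bool (k = q)" "Lmat n ?A' 2 1 = int q"
    using alt_sign_hyper_first_col_unit[OF A' idx(2)] by blast
  have "q = p" using q(3) row[OF idx(4)] L'[of 2 1] by simp
  have neg_second: "A 2 2 p = -1"
    using alt_sign_hyper_second_neg[OF A _ idx(2) p(1,2)] row idx n by simp
  have neg_penultimate: "A 2 (n - 1) p = -1"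
    using alt_sign_hyper_second_neg[OF A' _ idx(2) q(1,2)] row[OF idx(3)] L'[of 2 2] \<open>q = p\<close> n
    by (simp add: idx(5))
  have "A 1 2 p = 1" "A 1 (n - 1) p = 1"
    using alt_sign_seq_second_neg[OF alt_sign_hyper_lines(1)[OF A idx(1) idx(2) p(1)]]
      alt_sign_seq_second_neg[OF alt_sign_hyper_lines(1)[OF A idx(1) idx(3) p(1)]]
      neg_second neg_penultimate n by simp_all
  moreover have "2 < n - 1" using n by simp
  ultimately obtain l where l: "2 < l" "l < n - 1" "A 1 l p = -1"
    using alt_sign_seq_neg_between[OF alt_sign_hyper_lines(2)[OF A idx(1) idx(1) p(1)], of 2 "n - 1"]
    by auto
  have "l \<in> {1..n}" using l by simp
  then have "A 1 l p \<in> {0, 1}"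
    using alt_sign_seq_first[OF alt_sign_hyper_lines(1)[OF A idx(1) _ p(1)]] by simp
  with l(3) show False by simp
qed

lemma const_row_Lmat_reflect:
  "const_row n (Lmat n (\<lambda>i j k. A (n + 1 - i) j k)) r \<longleftrightarrow> const_row n (Lmat n A) (n + 1 - r)"
  unfolding const_row_def Lmat_def by simp

lemma const_row_Lmat_transpose:
  "const_row n (Lmat n (\<lambda>i j k. A j i k)) r \<longleftrightarrow> const_col n (Lmat n A) r"
  unfolding const_row_def const_col_def Lmat_def by simp

theorem mainTheorem7:
  fixes n :: nat and A :: "nat \<Rightarrow> nat \<Rightarrow> nat \<Rightarrow> int"
  assumes "n > 3" and "ASHM n A"
  shows "\<not> const_row n (Lmat n A) 2 \<and> \<not> const_row n (Lmat n A) (n - 1) \<and>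
         \<not> const_col n (Lmat n A) 2 \<and> \<not> const_col n (Lmat n A) (n - 1)"
proof -
  have A: "alt_sign_hyper n A" using ASHM_imp_alt_sign_hyper[OF assms(2)] .
  have A_transpose: "alt_sign_hyper n (\<lambda>i j k. A j i k)" using alt_sign_hyper_transpose[OF A] .
  have second_row: "\<not> const_row n (Lmat n B) 2" if "alt_sign_hyper n B" for B
    using Lmat_second_row_not_const[OF assms(1) that] .
  have "\<not> const_row n (Lmat n A) (n - 1)"
    using second_row[OF alt_sign_hyper_reflect[OF A]] const_row_Lmat_reflect[of n A 2] by simp
  moreover have "\<not> const_col n (Lmat n A) 2"
    using second_row[OF A_transpose] const_row_Lmat_transpose[of n A 2] by simp
  moreover have "\<not> const_col n (Lmat n A) (n - 1)"
    using second_row[OF alt_sign_hyper_reflect[OF A_transpose]]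
      const_row_Lmat_reflect[of n "\<lambda>i j k. A j i k" 2] const_row_Lmat_transpose[of n A "n - 1"]
    by simp
  ultimately show ?thesis using second_row[OF A] by blast
qed

end
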